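(* If $q$ is a prime power, $n\in\mathbb Z^+$ and $M\cong\mathrm{PG}(n-1,q)$, then $\mathcal T_n(M)$ is a tangle of order $n$ in $M$.
   Context: For a matroid $M$ and $X\subseteq E(M)$, $\lambda_M(X)=r_M(X)+r_M(E(M)-X)-r(M)$; $X$ is $k$-separating if $\lambda_M(X)<k$. For an integer $k$, $\mathcal T_k(M)$ is the collection of $(k-1)$-separating subsets of $E(M)$ that are neither spanning nor cospanning. For $\theta\in\mathbb Z^+$, a collection $\mathcal T$ of subsets of $E(M)$ is a tangle of order $\theta$ if: (i) every set in $\mathcal T$ is $(\theta-1)$-separating, and for each $(\theta-1)$-separating set $X$, either $X\in\mathcal T$ or $E(M)-X\in\mathcal T$; (ii) no three sets in $\mathcal T$ have union $E(M)$; (iii) $E(M)-\{e\}\notin\mathcal T$ for each $e\in E(M)$. *)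

theory Defs
  imports "HOL-Analysis.Finite_Cartesian_Product"
begin

definition matroid :: "'e set \<Rightarrow> ('e set \<Rightarrow> nat) \<Rightarrow> bool" where
  "matroid E r \<longleftrightarrow> finite E \<and>
     (\<forall>X. X \<subseteq> E \<longrightarrow> r X \<le> card X) \<and>
     (\<forall>X Y. X \<subseteq> Y \<and> Y \<subseteq> E \<longrightarrow> r X \<le> r Y) \<and>
     (\<forall>X Y. X \<subseteq> E \<and> Y \<subseteq> E \<longrightarrow> r (X \<union> Y) + r (X \<inter> Y) \<le> r X + r Y)"

definition matroid_iso :: "'e set \<Rightarrow> ('e set \<Rightarrow> nat) \<Rightarrow> 'g set \<Rightarrow> ('g set \<Rightarrow> nat) \<Rightarrow> bool" where
  "matroid_iso E r E' r' \<longleftrightarrow> matroid E r \<and> matroid E' r' \<and>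
     (\<exists>f. bij_betw f E E' \<and> (\<forall>X. X \<subseteq> E \<longrightarrow> r' (f ` X) = r X))"

definition conn :: "'e set \<Rightarrow> ('e set \<Rightarrow> nat) \<Rightarrow> 'e set \<Rightarrow> int" where
  "conn E r X = int (r X) + int (r (E - X)) - int (r E)"

definition k_separating :: "'e set \<Rightarrow> ('e set \<Rightarrow> nat) \<Rightarrow> int \<Rightarrow> 'e set \<Rightarrow> bool" where
  "k_separating E r k X \<longleftrightarrow> X \<subseteq> E \<and> conn E r X < k"

definition spanning :: "'e set \<Rightarrow> ('e set \<Rightarrow> nat) \<Rightarrow> 'e set \<Rightarrow> bool" where
  "spanning E r X \<longleftrightarrow> r X = r E"

definition dual_rank :: "'e set \<Rightarrow> ('e set \<Rightarrow> nat) \<Rightarrow> 'e set \<Rightarrow> nat" where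
  "dual_rank E r X = card X + r (E - X) - r E"

definition cospanning :: "'e set \<Rightarrow> ('e set \<Rightarrow> nat) \<Rightarrow> 'e set \<Rightarrow> bool" where
  "cospanning E r X \<longleftrightarrow> spanning E (dual_rank E r) X"

definition T_sets :: "'e set \<Rightarrow> ('e set \<Rightarrow> nat) \<Rightarrow> int \<Rightarrow> 'e set set" where
  "T_sets E r k = {X. k_separating E r (k - 1) X \<and> \<not> spanning E r X \<and> \<not> cospanning E r X}"

definition tangle :: "'e set \<Rightarrow> ('e set \<Rightarrow> nat) \<Rightarrow> int \<Rightarrow> 'e set set \<Rightarrow> bool" where
  "tangle E r \<theta> \<T> \<longleftrightarrow> \<theta> > 0 \<and>
     (\<forall>X\<in>\<T>. k_separating E r (\<theta> - 1) X) \<and>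
     (\<forall>X. k_separating E r (\<theta> - 1) X \<longrightarrow> X \<in> \<T> \<or> E - X \<in> \<T>) \<and>
     (\<forall>A\<in>\<T>. \<forall>B\<in>\<T>. \<forall>C\<in>\<T>. A \<union> B \<union> C \<noteq> E) \<and>
     (\<forall>e\<in>E. E - {e} \<notin> \<T>)"

text \<open>Vectors of F^n are represented as \<open>'f^'n\<close> with \<open>n = CARD('n)\<close>.\<close>
definition vscale :: "'f::field \<Rightarrow> 'f^'n \<Rightarrow> 'f^'n" where
  "vscale c v = (\<chi> i. c * v $ i)"

definition PG_E :: "('f::field^'n) set set" where
  "PG_E = {module.span vscale {v} | v. v \<noteq> 0}"

definition PG_rank :: "('f::field^'n) set set \<Rightarrow> nat" where
  "PG_rank X = vector_space.dim vscale (\<Union> X)"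

end

theory Submission
  imports Defs "HOL-Analysis.Cartesian_Space"
begin

text \<open>
  Two facts about \<open>F\<^sup>n\<close> drive the proof. The complement of a proper subspace spans the whole
  space, so in \<open>PG(n-1,q)\<close> the complement of every non-spanning set is spanning; hence the
  \<open>(n-1)\<close>-separating sets are exactly the sets of rank at most \<open>n-2\<close> and their complements,
  and such sets of small rank are also never cospanning. Secondly, three subspaces of
  codimension at least two never cover the space, which is the tangle axiom forbidding three
  small sets with union \<open>E\<close>.
\<close>

context module
begin

lemma Un_spans_eq_UNIV:
  assumes "span A \<union> span B = UNIV"
  shows "span A = UNIV \<or> span B = UNIV"
proof (rule ccontr)
  assume "\<not> ?thesis"
  then obtain a b where "a \<notin> span A" "b \<notin> span B" by blast
  with assms have "a \<in> span B" "b \<in> span A" by auto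
  with \<open>a \<notin> span A\<close> \<open>b \<notin> span B\<close> show False
    using assms span_add_eq[of b A a] span_add_eq[of a B b] by (auto simp: add.commute)
qed

lemma span_Compl_span_eq_UNIV:
  assumes "span S \<noteq> UNIV"
  shows "span (- span S) = UNIV"
proof -
  obtain w where w: "w \<notin> span S" using assms by blast
  have "v \<in> span (- span S)" for v
  proof (cases "v \<in> span S")
    case True
    then have "v + w \<in> span (- span S)" "w \<in> span (- span S)"
      using w span_add_eq[of v S w] by (auto intro: span_base)
    then show ?thesis using span_diff by fastforce
  qed (auto intro: span_base)
  then show ?thesis by blast
qed

text \<open>
  Over \<open>GF(2)\<close> three hyperplanes can cover the space, so codimension two is essential: it
  provides the vector \<open>v\<close> below, outside \<open>span B\<close> even after adjoining \<open>x\<^sub>1\<close>.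
\<close>
lemma Un_three_spans_neq_UNIV:
  assumes A: "\<And>x. span (insert x A) \<noteq> UNIV"
    and B: "\<And>x. span (insert x B) \<noteq> UNIV"
    and C: "\<And>x. span (insert x C) \<noteq> UNIV"
  shows "span A \<union> span B \<union> span C \<noteq> UNIV"
proof
  assume cover: "span A \<union> span B \<union> span C = UNIV"
  have proper: "span A \<noteq> UNIV" "span B \<noteq> UNIV" "span C \<noteq> UNIV"
    using A[of 0] B[of 0] C[of 0] span_mono[of A "insert 0 A"] span_mono[of B "insert 0 B"]
      span_mono[of C "insert 0 C"] by auto
  obtain x1 where x1: "x1 \<in> span A" "x1 \<notin> span B" "x1 \<notin> span C"
    using cover proper Un_spans_eq_UNIV[of B C] by blast
  obtain x3 where x3: "x3 \<in> span C" "x3 \<notin> span A" "x3 \<notin> span B"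
    using cover proper Un_spans_eq_UNIV[of A B] by blast
  have "x1 + x3 \<notin> span A" "x1 + x3 \<notin> span C"
    using x1 x3 span_add_eq span_add_eq2 by blast+
  then have x13: "x1 + x3 \<in> span B" using cover by blast
  let ?B' = "span (insert x1 B)"
  obtain v where v: "v \<notin> ?B'" using B by blast
  have "y \<in> ?B'" if "y \<in> {0, x1, x3, x1 + x3}" for y
  proof -
    have "x1 + x3 \<in> ?B'" "x1 \<in> ?B'"
      using x13 span_mono[of B "insert x1 B"] by (auto intro: span_base)
    then have "(x1 + x3) - x1 \<in> ?B'" by (rule span_diff)
    with \<open>x1 + x3 \<in> ?B'\<close> \<open>x1 \<in> ?B'\<close> that show ?thesis by (auto simp: span_zero)
  qed
  then have "v + y \<notin> span B" if "y \<in> {0, x1, x3, x1 + x3}" for y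
    using that v span_add_eq2 span_mono[of B "insert x1 B"] by blast
  then have in_AC: "v + y \<in> span A \<or> v + y \<in> span C" if "y \<in> {0, x1, x3, x1 + x3}" for y
    using that cover by blast
  have "v \<in> span A \<and> v \<in> span C"
  proof (cases "v \<in> span A")
    case True
    then have "v + x3 \<notin> span A" using x3 span_add_eq by blast
    then have "v + x3 \<in> span C" using in_AC[of x3] by blast
    then show ?thesis using True x3(1) span_add_eq2 by blast
  next
    case False
    then have "v \<in> span C" using in_AC[of 0] by simp
    then have "v + x1 \<notin> span C" using x1 span_add_eq by blast
    then have "v + x1 \<in> span A" using in_AC[of x1] by blast
    then show ?thesis using \<open>v \<in> span C\<close> x1(1) span_add_eq2 by blast
  qed
  moreover have "v + (x1 + x3) \<in> span A \<or> v + (x1 + x3) \<in> span C"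
    using in_AC by blast
  ultimately show False
    using x1 x3 span_add_eq[of v _ "x1 + x3"] span_add_eq[of x1 _ x3] span_add_eq2[of x3 _ x1]
    by blast
qed

end

lemma (in finite_dimensional_vector_space) span_insert_neq_UNIV:
  assumes "dim S + 2 \<le> dimension"
  shows "span (insert x S) \<noteq> UNIV"
  using assms dim_eq_full[of "insert x S"] by (simp add: dim_insert split: if_splits)

lemma vscale_eq_scaleR_vec: "vscale = (*s)"
  by (auto simp: fun_eq_iff vscale_def vector_scalar_mult_def)

lemma PG_E_eq: "PG_E = {vec.span {v} | v. v \<noteq> (0::'f::field^'n)}"
  unfolding PG_E_def vscale_eq_scaleR_vec ..

lemma PG_rank_eq: "PG_rank X = vec.dim (\<Union>X)"
  unfolding PG_rank_def vscale_eq_scaleR_vec ..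

lemma vec_dim_eq_CARD_iff: "vec.dim (S::('f::field^'n) set) = CARD('n) \<longleftrightarrow> vec.span S = UNIV"
  using vec.dim_eq_full[of S] by (simp add: vec.dimension_def card_cart_basis)

lemma span_singleton_in_PG_E: "(v::'f::field^'n) \<noteq> 0 \<Longrightarrow> vec.span {v} \<in> PG_E"
  unfolding PG_E_eq by blast

lemma Union_PG_E: "\<Union>(PG_E :: ('f::field^'n) set set) = UNIV"
proof -
  have "v \<in> \<Union>(PG_E :: ('f^'n) set set)" if "v \<noteq> 0" for v :: "'f^'n"
    using span_singleton_in_PG_E[OF that] vec.span_base[of v "{v}"] by blast
  moreover have "(0 :: 'f^'n) \<in> \<Union>PG_E"
    using span_singleton_in_PG_E[of "axis undefined 1"] vec.span_zero by (auto simp: axis_eq_0_iff)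
  ultimately show ?thesis by (metis UNIV_eq_I)
qed

lemma PG_rank_PG_E: "PG_rank (PG_E :: ('f::field^'n) set set) = CARD('n)"
  unfolding PG_rank_eq Union_PG_E by (metis vec_dim_eq_CARD_iff vec.span_UNIV)

lemma compl_span_subset_Union_PG_E_Diff:
  assumes "X \<subseteq> PG_E"
  shows "- vec.span (\<Union>X) \<subseteq> \<Union>((PG_E :: ('f::field^'n) set set) - X)"
proof
  fix v :: "'f^'n"
  assume v: "v \<in> - vec.span (\<Union>X)"
  then have "v \<noteq> 0" using vec.span_zero by auto
  moreover have "v \<in> vec.span {v}" by (simp add: vec.span_base)
  moreover have "vec.span {v} \<notin> X"
  proof
    assume "vec.span {v} \<in> X"
    with \<open>v \<in> vec.span {v}\<close> have "v \<in> \<Union>X" by blast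
    with v show False using vec.span_base by blast
  qed
  ultimately show "v \<in> \<Union>(PG_E - X)" using span_singleton_in_PG_E by blast
qed

lemma PG_rank_Diff:
  assumes "X \<subseteq> PG_E" "PG_rank X < CARD('n)"
  shows "PG_rank ((PG_E :: ('f::field^'n) set set) - X) = CARD('n)"
proof -
  have "vec.span (\<Union>X) \<noteq> UNIV"
    using assms(2) vec_dim_eq_CARD_iff[of "\<Union>X"] by (auto simp: PG_rank_eq)
  then have "vec.span (\<Union>(PG_E - X)) = UNIV"
    using vec.span_Compl_span_eq_UNIV vec.span_mono[OF compl_span_subset_Union_PG_E_Diff[OF assms(1)]]
    by blast
  then show ?thesis
    by (simp add: PG_rank_eq vec_dim_eq_CARD_iff)
qed

lemma PG_not_Un_three_small:
  assumes "A \<union> B \<union> C = (PG_E :: ('f::field^'n) set set)"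
    and "PG_rank A + 2 \<le> CARD('n)" "PG_rank B + 2 \<le> CARD('n)" "PG_rank C + 2 \<le> CARD('n)"
  shows False
proof -
  have "\<Union>A \<union> \<Union>B \<union> \<Union>C = UNIV"
    using assms(1) Union_PG_E by (metis Union_Un_distrib)
  then have "vec.span (\<Union>A) \<union> vec.span (\<Union>B) \<union> vec.span (\<Union>C) = UNIV"
    using vec.span_superset by blast
  moreover have "\<And>x. vec.span (insert x (\<Union>A)) \<noteq> UNIV" "\<And>x. vec.span (insert x (\<Union>B)) \<noteq> UNIV"
    "\<And>x. vec.span (insert x (\<Union>C)) \<noteq> UNIV"
    using assms(2-4) vec.span_insert_neq_UNIV
    by (simp_all add: PG_rank_eq vec.dimension_def card_cart_basis)
  ultimately show False using vec.Un_three_spans_neq_UNIV by blast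
qed

lemma matroid_rank_le_card: "matroid E r \<Longrightarrow> X \<subseteq> E \<Longrightarrow> r X \<le> card X"
  unfolding matroid_def by blast

lemma matroid_rank_mono: "matroid E r \<Longrightarrow> X \<subseteq> Y \<Longrightarrow> Y \<subseteq> E \<Longrightarrow> r X \<le> r Y"
  unfolding matroid_def by blast

lemma matroid_rank_submod:
  "matroid E r \<Longrightarrow> X \<subseteq> E \<Longrightarrow> Y \<subseteq> E \<Longrightarrow> r (X \<union> Y) + r (X \<inter> Y) \<le> r X + r Y"
  unfolding matroid_def by blast

lemma matroid_rank_empty: "matroid E r \<Longrightarrow> r {} = 0"
  using matroid_rank_le_card[of E r "{}"] by simp

lemma matroid_rank_singleton: "matroid E r \<Longrightarrow> e \<in> E \<Longrightarrow> r {e} \<le> 1"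
  using matroid_rank_le_card[of E r "{e}"] by simp

lemma matroid_rank_insert_le:
  assumes "matroid E r" "Y \<subseteq> E" "e \<in> E"
  shows "r (insert e Y) \<le> r Y + 1"
  using matroid_rank_submod[OF assms(1,2), of "{e}"] matroid_rank_singleton[OF assms(1,3)] assms(2,3)
  by simp

lemma cospanning_iff_independent_complement:
  assumes M: "matroid E r" and Y: "Y \<subseteq> E"
  shows "cospanning E r Y \<longleftrightarrow> r (E - Y) = card (E - Y)"
proof -
  have fin: "finite E" using M unfolding matroid_def by blast
  have "r E \<le> r Y + r (E - Y)"
    using matroid_rank_submod[OF M Y, of "E - Y"] Y by (simp add: Un_absorb1)
  moreover have "r Y \<le> card Y" "r (E - Y) \<le> card (E - Y)"
    using matroid_rank_le_card[OF M] Y by auto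
  moreover have "card E = card Y + card (E - Y)"
    using Y fin by (metis card_Diff_subset card_mono finite_subset le_add_diff_inverse)
  ultimately show ?thesis
    unfolding cospanning_def spanning_def dual_rank_def using matroid_rank_empty[OF M] by (simp; arith)
qed

text \<open>Since non-spanning sets have spanning complements, \<open>\<lambda>(X) = r(X)\<close> whenever \<open>r(X) < n\<close>.\<close>
lemma T_sets_iff_rank:
  assumes M: "matroid E r" and rank_E: "r E = n"
    and compl: "\<And>X. X \<subseteq> E \<Longrightarrow> r X < n \<Longrightarrow> r (E - X) = n"
    and Y: "Y \<subseteq> E"
  shows "Y \<in> T_sets E r (int n) \<longleftrightarrow> r Y + 2 \<le> n"
proof
  assume "Y \<in> T_sets E r (int n)"
  then have "conn E r Y < int n - 1" "r Y \<noteq> n"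
    unfolding T_sets_def k_separating_def spanning_def using rank_E by auto
  moreover have "r Y \<le> n" using matroid_rank_mono[OF M Y] rank_E by simp
  ultimately show "r Y + 2 \<le> n"
    using compl[OF Y] rank_E unfolding conn_def by simp
next
  assume small: "r Y + 2 \<le> n"
  then have compl_Y: "r (E - Y) = n" using compl[OF Y] by simp
  have "\<not> cospanning E r Y"
  proof
    assume "cospanning E r Y"
    then have card_compl: "card (E - Y) = n"
      using cospanning_iff_independent_complement[OF M Y] compl_Y by simp
    then have "E - Y \<noteq> {}" using small by (cases "E - Y = {}") auto
    then obtain e where e: "e \<in> E" "e \<notin> Y" by blast
    have "r (E - Y - {e}) \<le> n - 1"
      using matroid_rank_le_card[OF M, of "E - Y - {e}"] card_compl e by auto
    then have "r (E - (E - Y - {e})) = n" using compl[of "E - Y - {e}"] small by fastforce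
    moreover have "E - (E - Y - {e}) = insert e Y" using Y e by blast
    ultimately show False using matroid_rank_insert_le[OF M Y e(1)] small by simp
  qed
  then show "Y \<in> T_sets E r (int n)"
    using small compl_Y rank_E Y
    unfolding T_sets_def k_separating_def spanning_def conn_def by auto
qed

lemma tangle_T_sets:
  assumes M: "matroid E r" and "0 < n" and rank_E: "r E = n"
    and compl: "\<And>X. X \<subseteq> E \<Longrightarrow> r X < n \<Longrightarrow> r (E - X) = n"
    and no_cover: "\<And>A B C. A \<union> B \<union> C = E \<Longrightarrow>
        r A + 2 \<le> n \<Longrightarrow> r B + 2 \<le> n \<Longrightarrow> r C + 2 \<le> n \<Longrightarrow> False"
  shows "tangle E r (int n) (T_sets E r (int n))"
proof -
  let ?T = "T_sets E r (int n)"
  have T_iff: "X \<in> ?T \<longleftrightarrow> X \<subseteq> E \<and> r X + 2 \<le> n" for X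
    using T_sets_iff_rank[OF M rank_E compl] unfolding T_sets_def k_separating_def by blast
  have "X \<in> ?T \<or> E - X \<in> ?T" if "k_separating E r (int n - 1) X" for X
  proof -
    have X: "X \<subseteq> E" and sep: "int (r X) + int (r (E - X)) < 2 * int n - 1"
      using that rank_E unfolding k_separating_def conn_def by auto
    have "r X \<le> n" "r (E - X) \<le> n"
      using matroid_rank_mono[OF M, of X E] matroid_rank_mono[OF M, of "E - X" E] X rank_E by auto
    then have "r X + 2 \<le> n \<or> r (E - X) + 2 \<le> n"
      using sep compl[OF X] by fastforce
    then show ?thesis using T_iff X by auto
  qed
  moreover have "E - {e} \<notin> ?T" if "e \<in> E" for e
  proof
    assume "E - {e} \<in> ?T"
    then have "r (E - {e}) + 2 \<le> n" using T_iff by blast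
    moreover have "E - (E - {e}) = {e}" using that by blast
    ultimately show False
      using compl[of "E - {e}"] matroid_rank_singleton[OF M that] by auto
  qed
  moreover have "A \<union> B \<union> C \<noteq> E" if "A \<in> ?T" "B \<in> ?T" "C \<in> ?T" for A B C
    using that T_iff no_cover by blast
  ultimately show ?thesis
    using \<open>0 < n\<close> unfolding tangle_def by (auto simp: T_sets_def)
qed

theorem lemma6p3:
  fixes E :: "'e set" and r :: "'e set \<Rightarrow> nat"
  assumes "matroid_iso E r (PG_E :: ('f::{field,finite}^'n) set set) PG_rank"
  shows "tangle E r (int CARD('n)) (T_sets E r (int CARD('n)))"
proof -
  have M: "matroid E r" using assms unfolding matroid_iso_def by blast
  obtain f where f: "bij_betw f E (PG_E :: ('f^'n) set set)"
    and rank_f: "\<And>X. X \<subseteq> E \<Longrightarrow> PG_rank (f ` X) = r X"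
    using assms unfolding matroid_iso_def by blast
  have image_E: "f ` E = PG_E" using f by (simp add: bij_betw_def)
  show ?thesis
  proof (rule tangle_T_sets[OF M])
    show "r E = CARD('n)" using rank_f[of E] image_E by (simp add: PG_rank_PG_E)
  next
    fix X assume X: "X \<subseteq> E" "r X < CARD('n)"
    have "f ` (E - X) = PG_E - f ` X"
      using f X(1) image_E by (simp add: bij_betw_def inj_on_image_set_diff)
    moreover have "PG_rank (PG_E - f ` X) = CARD('n)"
      using X image_E rank_f by (intro PG_rank_Diff) auto
    ultimately show "r (E - X) = CARD('n)" using rank_f[of "E - X"] by simp
  next
    fix A B C assume cover: "A \<union> B \<union> C = E"
      and small: "r A + 2 \<le> CARD('n)" "r B + 2 \<le> CARD('n)" "r C + 2 \<le> CARD('n)"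
    have "f ` A \<union> f ` B \<union> f ` C = PG_E" using cover image_E by (metis image_Un)
    moreover have "PG_rank (f ` A) = r A" "PG_rank (f ` B) = r B" "PG_rank (f ` C) = r C"
      using cover rank_f by auto
    ultimately show False using PG_not_Un_three_small small by metis
  qed simp
qed

end
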